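(* Let $G=D_{2n}$ be the dihedral group of order $2n$ with $n$ odd, and let $\mathcal{C}\subseteq G\setminus\{1\}$ be a subset closed under conjugation by $G$ which generates $G$. Then $K_{\mathcal{C}}$ is non-degenerate.
   Context: For a finite group $G$ and a subset $\mathcal{C}\subseteq G\setminus\{1\}$ closed under conjugation, the Killing form $K_{\mathcal{C}}$ is the bilinear form on the complex vector space with basis $\mathcal{C}$ given on basis elements by $K_{\mathcal{C}}(a,b)=|C_G(ab)\cap\mathcal{C}|$; it is non-degenerate if the matrix $(K_{\mathcal{C}}(a,b))_{a,b\in\mathcal{C}}$ is invertible. *)

theory Defs
  imports Complex_Main "HOL-Algebra.Algebra"
begin

text \<open>The dihedral group of order 2n: the element (k, b) stands for r^k s^b with
  0 \<le> k < n, where r is a rotation of order n and s a reflection with s r s = r^-1.\<close>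
definition dihedral_group :: "nat \<Rightarrow> (nat \<times> bool) monoid" where
  "dihedral_group n =
     \<lparr> carrier = {0..<n} \<times> UNIV,
       monoid.mult = (\<lambda>(a, b) (c, d). ((if b then a + n - c else a + c) mod n, b \<noteq> d)),
       monoid.one = (0, False) \<rparr>"

definition centralizer :: "('a, 'b) monoid_scheme \<Rightarrow> 'a \<Rightarrow> 'a set" where
  "centralizer G x = {g \<in> carrier G. g \<otimes>\<^bsub>G\<^esub> x = x \<otimes>\<^bsub>G\<^esub> g}"

definition conj_closed :: "('a, 'b) monoid_scheme \<Rightarrow> 'a set \<Rightarrow> bool" where
  "conj_closed G C \<longleftrightarrow>
     (\<forall>g\<in>carrier G. \<forall>c\<in>C. g \<otimes>\<^bsub>G\<^esub> c \<otimes>\<^bsub>G\<^esub> inv\<^bsub>G\<^esub> g \<in> C)"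

definition killing_matrix :: "('a, 'b) monoid_scheme \<Rightarrow> 'a set \<Rightarrow> 'a \<Rightarrow> 'a \<Rightarrow> complex" where
  "killing_matrix G C a b = of_nat (card (centralizer G (a \<otimes>\<^bsub>G\<^esub> b) \<inter> C))"

definition set_matrix_invertible :: "'a set \<Rightarrow> ('a \<Rightarrow> 'a \<Rightarrow> complex) \<Rightarrow> bool" where
  "set_matrix_invertible I M \<longleftrightarrow>
     (\<exists>N. (\<forall>i\<in>I. \<forall>j\<in>I. (\<Sum>k\<in>I. M i k * N k j) = (if i = j then 1 else 0)) \<and>
          (\<forall>i\<in>I. \<forall>j\<in>I. (\<Sum>k\<in>I. N i k * M k j) = (if i = j then 1 else 0)))"

definition killing_nondegenerate :: "('a, 'b) monoid_scheme \<Rightarrow> 'a set \<Rightarrow> bool" where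
  "killing_nondegenerate G C \<longleftrightarrow> set_matrix_invertible C (killing_matrix G C)"

end

theory Submission
  imports Defs
begin

(*
  Since n is odd, the n reflections of D_2n form a single conjugacy class, so a generating
  normal subset C contains all of them; the rest of C is a set R of m nontrivial rotations,
  closed under inversion. For odd n the centraliser of a nontrivial rotation is the rotation
  subgroup and that of a reflection s is {1, s}. Hence K_C(a, b) = 1 if exactly one of a, b
  is a reflection, and K_C(a, b) = m + n [b = a^-1] otherwise: K_C = n P + B with P the
  permutation matrix of inversion and B constant on the blocks (reflections, R). Such a matrix
  has an inverse of the form P/n + G with G block-constant, where G solves a 2 x 2 linear
  system of determinant n ((m + 1) (n + m^2) - m) > 0.
*)

section \<open>Matrices that are block-constant up to an involution\<close>

lemma set_matrix_invertible_symmetric: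
  assumes "\<And>i j. i \<in> I \<Longrightarrow> j \<in> I \<Longrightarrow> M i j = M j i"
    and "\<And>i j. i \<in> I \<Longrightarrow> j \<in> I \<Longrightarrow> N i j = N j i"
    and right_inverse: "\<And>i j. i \<in> I \<Longrightarrow> j \<in> I \<Longrightarrow> (\<Sum>k\<in>I. M i k * N k j) = (if i = j then 1 else 0)"
  shows "set_matrix_invertible I M"
  unfolding set_matrix_invertible_def
proof (intro exI[of _ N] conjI ballI)
  fix i j assume ij: "i \<in> I" "j \<in> I"
  then show "(\<Sum>k\<in>I. M i k * N k j) = (if i = j then 1 else 0)" by (rule right_inverse)
  have "(\<Sum>k\<in>I. N i k * M k j) = (\<Sum>k\<in>I. M j k * N k i)"
    using ij by (intro sum.cong) (simp_all add: assms(1,2) mult.commute)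
  then show "(\<Sum>k\<in>I. N i k * M k j) = (if i = j then 1 else 0)"
    using right_inverse[OF ij(2,1)] by simp
qed

lemma set_matrix_invertible_cong:
  assumes "\<And>i j. i \<in> I \<Longrightarrow> j \<in> I \<Longrightarrow> M i j = M' i j"
  shows "set_matrix_invertible I M \<longleftrightarrow> set_matrix_invertible I M'"
  unfolding set_matrix_invertible_def using assms by (simp cong: sum.cong)

lemma sum_bool_fibres:
  fixes f :: "bool \<Rightarrow> 'a::comm_semiring_1"
  assumes "finite I"
  shows "(\<Sum>k\<in>I. f (t k)) = of_nat (card {k\<in>I. t k}) * f True + of_nat (card {k\<in>I. \<not> t k}) * f False"
proof -
  have "(\<Sum>k\<in>I. f (t k)) = (\<Sum>k\<in>{k\<in>I. t k}. f (t k)) + (\<Sum>k\<in>{k\<in>I. \<not> t k}. f (t k))"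
    using assms by (subst sum.union_disjoint[symmetric]) (auto intro: sum.cong)
  then show ?thesis by simp
qed

lemma set_matrix_invertible_block_plus_involution:
  fixes I :: "'i set" and t :: "'i \<Rightarrow> bool" and s :: "'i \<Rightarrow> 'i" and a b c :: complex
  defines "p \<equiv> of_nat (card {i\<in>I. t i})" and "q \<equiv> of_nat (card {i\<in>I. \<not> t i})"
  assumes "finite I"
    and s: "\<And>i. i \<in> I \<Longrightarrow> s i \<in> I" "\<And>i. i \<in> I \<Longrightarrow> t (s i) = t i" "\<And>i. i \<in> I \<Longrightarrow> s (s i) = i"
    and "c \<noteq> 0" and det: "(c + a * p) * (c + a * q) \<noteq> b\<^sup>2 * p * q"
  shows "set_matrix_invertible I (\<lambda>i k. (if t i = t k then a else b) + (if k = s i then c else 0))"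
proof -
  define \<beta> where "\<beta> u v = (if u = v then a else b)" for u v :: bool
  define d where "d = (c + a * p) * (c + a * q) - b\<^sup>2 * p * q"
  \<comment> \<open>\<open>\<gamma> = - (c I + \<beta> D)\<^sup>-\<^sup>1 \<beta> / c\<close> for the 2 x 2 matrices \<open>\<beta>\<close> and \<open>D = diag p q\<close>, by Cramer's rule;
    \<open>block_equation\<close> is \<open>(c I + \<beta> D) \<gamma> = - \<beta> / c\<close>.\<close>
  define \<gamma> where "\<gamma> u v = (if u = v then - (a * c + (a\<^sup>2 - b\<^sup>2) * (if u then q else p)) / (c * d) else - b / d)"
    for u v :: bool
  define N where "N k j = (if k = s j then 1 / c else 0) + \<gamma> (t k) (t j)" for k j
  have "d \<noteq> 0" using det by (simp add: d_def)
  have block_equation: "\<beta> u v / c + p * \<beta> u True * \<gamma> True v + q * \<beta> u False * \<gamma> False v + c * \<gamma> u v = 0"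
    for u v
    using \<open>c \<noteq> 0\<close> \<open>d \<noteq> 0\<close>
    apply (cases u; cases v)
    apply (simp_all add: \<beta>_def \<gamma>_def field_simps)
    apply (simp_all add: d_def algebra_simps power2_eq_square)
    done
  have swap: "k = s i \<longleftrightarrow> i = s k" if "i \<in> I" "k \<in> I" for i k
    using that s(3) by metis
  show ?thesis
  proof (rule set_matrix_invertible_symmetric)
    fix i j assume ij: "i \<in> I" "j \<in> I"
    have "(\<Sum>k\<in>I. ((if t i = t k then a else b) + (if k = s i then c else 0)) * N k j)
      = (\<Sum>k\<in>I. (if k = s j then \<beta> (t i) (t k) / c else 0)) + (\<Sum>k\<in>I. \<beta> (t i) (t k) * \<gamma> (t k) (t j))
        + (\<Sum>k\<in>I. (if k = s i then (if k = s j then 1 else 0) else 0))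
        + (\<Sum>k\<in>I. (if k = s i then c * \<gamma> (t k) (t j) else 0))"
      unfolding sum.distrib[symmetric] using \<open>c \<noteq> 0\<close>
      by (intro sum.cong) (auto simp: N_def \<beta>_def algebra_simps)
    also have "\<dots> = \<beta> (t i) (t j) / c + (p * \<beta> (t i) True * \<gamma> True (t j) + q * \<beta> (t i) False * \<gamma> False (t j))
        + (if i = j then 1 else 0) + c * \<gamma> (t i) (t j)"
    proof -
      have "s i = s j \<longleftrightarrow> i = j"
        using ij s(3) by metis
      then show ?thesis
        using ij s(1,2) sum_bool_fibres[OF \<open>finite I\<close>, of "\<lambda>u. \<beta> (t i) u * \<gamma> u (t j)" t]
        by (simp add: \<open>finite I\<close> sum.delta p_def q_def)
    qed
    also have "\<dots> = (if i = j then 1 else 0)"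
      using block_equation[of "t i" "t j"] by (simp add: algebra_simps)
    finally show "(\<Sum>k\<in>I. ((if t i = t k then a else b) + (if k = s i then c else 0)) * N k j) = (if i = j then 1 else 0)" .
  next
    fix i k assume "i \<in> I" "k \<in> I"
    then show "N i k = N k i" "((if t i = t k then a else b) + (if k = s i then c else 0)) = ((if t k = t i then a else b) + (if i = s k then c else 0))"
      using swap by (auto simp: N_def \<gamma>_def)
  qed
qed

lemma nat_mod_less: "0 < n \<Longrightarrow> nat (x mod int n) < n"
  by (simp add: nat_less_iff)

lemma odd_dvd_double_diff_iff:
  assumes "odd n" "a < n" "c < n"
  shows "int n dvd 2 * (int a - int c) \<longleftrightarrow> a = c"
proof
  assume "int n dvd 2 * (int a - int c)"
  moreover have "coprime (int n) 2"
    using assms(1) by simp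
  ultimately have "int n dvd int a - int c"
    using coprime_dvd_mult_right_iff by metis
  moreover have "\<bar>int a - int c\<bar> < int n"
    using assms by simp
  ultimately have "int a - int c = 0"
    using dvd_imp_le_int[of "int a - int c" "int n"] by linarith
  then show "a = c" by simp
qed simp

lemma nat_mod_eq_iff_dvd:
  assumes "0 < n"
  shows "nat (x mod int n) = nat (y mod int n) \<longleftrightarrow> int n dvd x - y"
  using assms by (simp add: nat_eq_iff2 mod_eq_dvd_iff dvd_diff_commute)

section \<open>The dihedral group\<close>

lemma dihedral_carrier: "carrier (dihedral_group n) = {0..<n} \<times> UNIV"
  by (simp add: dihedral_group_def)

lemma dihedral_one: "\<one>\<^bsub>dihedral_group n\<^esub> = (0, False)"
  by (simp add: dihedral_group_def)

(* The rotation index of a product, read in the integers to avoid truncated subtraction. *)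
lemma dihedral_mult:
  assumes "c < n"
  shows "(a, b) \<otimes>\<^bsub>dihedral_group n\<^esub> (c, d) =
    (nat ((int a + (if b then - int c else int c)) mod int n), b \<noteq> d)"
proof -
  have "(int a + int n - int c) mod int n = (int a - int c) mod int n"
    by (metis add_diff_eq diff_add_eq mod_add_self2)
  then have int_fst: "int ((if b then a + n - c else a + c) mod n) =
      (int a + (if b then - int c else int c)) mod int n"
    using assms by (simp add: of_nat_mod of_nat_diff)
  show ?thesis by (simp add: dihedral_group_def flip: int_fst)
qed

lemma snd_dihedral_mult: "snd (x \<otimes>\<^bsub>dihedral_group n\<^esub> y) = (snd x \<noteq> snd y)"
  by (cases x; cases y) (simp add: dihedral_group_def)

lemma finite_dihedral_carrier: "finite (carrier (dihedral_group n))"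
  by (simp add: dihedral_carrier)

lemma dihedral_mult_assoc:
  assumes "0 < n" "c < n" "e < n"
  shows "(a, b) \<otimes>\<^bsub>dihedral_group n\<^esub> (c, d) \<otimes>\<^bsub>dihedral_group n\<^esub> (e, f) =
    (a, b) \<otimes>\<^bsub>dihedral_group n\<^esub> ((c, d) \<otimes>\<^bsub>dihedral_group n\<^esub> (e, f))"
  using assms by (cases b; cases d) (simp_all add: dihedral_mult nat_mod_less mod_simps algebra_simps)

lemma dihedral_rotation_left_inverse:
  assumes "0 < n" "a < n"
  shows "(nat (- int a mod int n), False) \<otimes>\<^bsub>dihedral_group n\<^esub> (a, False) = (0, False)"
  using assms by (simp add: dihedral_mult mod_simps)

lemma dihedral_reflection_square:
  assumes "a < n"
  shows "(a, True) \<otimes>\<^bsub>dihedral_group n\<^esub> (a, True) = (0, False)"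
  using assms by (simp add: dihedral_mult)

lemma group_dihedral_group:
  assumes "0 < n"
  shows "group (dihedral_group n)"
proof (rule groupI)
  show "\<exists>y\<in>carrier (dihedral_group n). y \<otimes>\<^bsub>dihedral_group n\<^esub> x = \<one>\<^bsub>dihedral_group n\<^esub>"
    if x_carrier: "x \<in> carrier (dihedral_group n)" for x
  proof -
    obtain a b where x: "x = (a, b)" "a < n"
      using x_carrier by (cases x) (auto simp: dihedral_carrier)
    show ?thesis
    proof (cases b)
      case True
      then show ?thesis
        using x dihedral_reflection_square
        by (intro bexI[of _ x]) (auto simp: dihedral_carrier dihedral_one)
    next
      case False
      show ?thesis
      proof
        show "(nat (- int a mod int n), False) \<otimes>\<^bsub>dihedral_group n\<^esub> x = \<one>\<^bsub>dihedral_group n\<^esub>"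
          using dihedral_rotation_left_inverse[OF assms x(2)] by (simp add: x False dihedral_one)
        show "(nat (- int a mod int n), False) \<in> carrier (dihedral_group n)"
          using nat_mod_less[OF assms] by (simp add: dihedral_carrier)
      qed
    qed
  qed
next
  fix x y z
  assume "x \<in> carrier (dihedral_group n)" "y \<in> carrier (dihedral_group n)" "z \<in> carrier (dihedral_group n)"
  then show "x \<otimes>\<^bsub>dihedral_group n\<^esub> y \<otimes>\<^bsub>dihedral_group n\<^esub> z =
      x \<otimes>\<^bsub>dihedral_group n\<^esub> (y \<otimes>\<^bsub>dihedral_group n\<^esub> z)"
    using dihedral_mult_assoc[OF assms] by (cases x; cases y; cases z) (simp add: dihedral_carrier)
next
  fix x y
  assume "x \<in> carrier (dihedral_group n)" "y \<in> carrier (dihedral_group n)"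
  then show "x \<otimes>\<^bsub>dihedral_group n\<^esub> y \<in> carrier (dihedral_group n)"
    using nat_mod_less[OF assms] by (cases x; cases y) (simp add: dihedral_carrier dihedral_mult)
qed (use assms in \<open>auto simp: dihedral_carrier dihedral_one dihedral_mult\<close>)

lemma dihedral_inv_rotation:
  assumes "0 < n" "a < n"
  shows "inv\<^bsub>dihedral_group n\<^esub> (a, False) = (nat (- int a mod int n), False)"
  using group.inv_equality[OF group_dihedral_group[OF assms(1)]] dihedral_rotation_left_inverse[OF assms]
    nat_mod_less[OF assms(1)] assms
  by (simp add: dihedral_one dihedral_carrier)

lemma dihedral_inv_reflection:
  assumes "a < n"
  shows "inv\<^bsub>dihedral_group n\<^esub> (a, True) = (a, True)"
  using group.inv_equality[OF group_dihedral_group] dihedral_reflection_square assms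
  by (simp add: dihedral_one dihedral_carrier)

lemma snd_dihedral_inv:
  assumes "0 < n" "x \<in> carrier (dihedral_group n)"
  shows "snd (inv\<^bsub>dihedral_group n\<^esub> x) = snd x"
  using assms by (cases x; cases "snd x") (auto simp: dihedral_carrier dihedral_inv_rotation dihedral_inv_reflection)

lemma subgroup_dihedral_rotations:
  assumes "0 < n"
  shows "subgroup ({0..<n} \<times> {False}) (dihedral_group n)"
  using assms nat_mod_less[OF assms]
  by (intro group.subgroupI[OF group_dihedral_group])
    (auto simp: dihedral_carrier dihedral_inv_rotation dihedral_mult)

lemma dihedral_commute_iff:
  assumes "odd n" "x \<in> carrier (dihedral_group n)" "y \<in> carrier (dihedral_group n)"
  shows "x \<otimes>\<^bsub>dihedral_group n\<^esub> y = y \<otimes>\<^bsub>dihedral_group n\<^esub> x \<longleftrightarrow>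
    x = \<one>\<^bsub>dihedral_group n\<^esub> \<or> y = \<one>\<^bsub>dihedral_group n\<^esub> \<or> x = y \<or> \<not> snd x \<and> \<not> snd y"
proof -
  have "0 < n" using assms(1) by (rule odd_pos)
  obtain a b c d where x: "x = (a, b)" "a < n" and y: "y = (c, d)" "c < n"
    using assms(2,3) by (cases x; cases y) (auto simp: dihedral_carrier)
  have "x \<otimes>\<^bsub>dihedral_group n\<^esub> y = y \<otimes>\<^bsub>dihedral_group n\<^esub> x \<longleftrightarrow>
      int n dvd (int a + (if b then - int c else int c)) - (int c + (if d then - int a else int a))"
    using x y by (auto simp: dihedral_mult nat_mod_eq_iff_dvd[OF \<open>0 < n\<close>])
  also have "\<dots> \<longleftrightarrow> x = \<one>\<^bsub>dihedral_group n\<^esub> \<or> y = \<one>\<^bsub>dihedral_group n\<^esub> \<or> x = y \<or> \<not> snd x \<and> \<not> snd y"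
  proof (cases b; cases d)
    assume b d
    then show ?thesis
      using odd_dvd_double_diff_iff[OF assms(1) x(2) y(2)] by (simp add: x y dihedral_one algebra_simps)
  next
    assume b "\<not> d"
    then show ?thesis
      using odd_dvd_double_diff_iff[OF assms(1) y(2) _, of 0] \<open>0 < n\<close> by (simp add: x y dihedral_one algebra_simps)
  next
    assume "\<not> b" d
    then show ?thesis
      using odd_dvd_double_diff_iff[OF assms(1) x(2) _, of 0] \<open>0 < n\<close> by (simp add: x y dihedral_one algebra_simps)
  qed (simp add: x y)
  finally show ?thesis .
qed

lemma centralizer_one:
  assumes "monoid G"
  shows "centralizer G \<one>\<^bsub>G\<^esub> = carrier G"
  using assms by (auto simp: centralizer_def monoid.l_one monoid.r_one)

lemma dihedral_centralizer_rotation: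
  assumes "odd n" "0 < r" "r < n"
  shows "centralizer (dihedral_group n) (r, False) = {0..<n} \<times> {False}"
proof -
  have "x \<in> centralizer (dihedral_group n) (r, False) \<longleftrightarrow> x \<in> carrier (dihedral_group n) \<and> \<not> snd x" for x
    using dihedral_commute_iff[OF assms(1), of x "(r, False)"] assms(2,3)
    unfolding centralizer_def by (auto simp: dihedral_carrier dihedral_one)
  then show ?thesis
    by (auto simp: dihedral_carrier)
qed

lemma dihedral_centralizer_reflection:
  assumes "odd n" "r < n"
  shows "centralizer (dihedral_group n) (r, True) = {(0, False), (r, True)}"
  using assms odd_pos[OF assms(1)] dihedral_commute_iff[OF assms(1), of _ "(r, True)"]
  by (auto simp: centralizer_def dihedral_carrier dihedral_one)

lemma dihedral_reflections_conjugate: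
  assumes "odd n" "k < n" "j < n"
  obtains g where "g \<in> carrier (dihedral_group n)"
    and "g \<otimes>\<^bsub>dihedral_group n\<^esub> (k, True) \<otimes>\<^bsub>dihedral_group n\<^esub> inv\<^bsub>dihedral_group n\<^esub> g = (j, True)"
proof -
  have "0 < n" using assms(1) by (rule odd_pos)
  \<comment> \<open>\<open>h\<close> inverts 2 modulo \<open>n\<close>, and conjugation by \<open>(t, True)\<close> maps \<open>(k, True)\<close> to \<open>(2 t - k, True)\<close>.\<close>
  define h where "h = int (n div 2) + 1"
  have "int (2 * (n div 2) + 1) = int n"
    by (simp only: odd_two_times_div_two_succ[OF assms(1)])
  then have h: "2 * h = int n + 1"
    unfolding h_def by simp
  define t where "t = nat (((int j + int k) * h) mod int n)"
  have "t < n" and int_t: "int t = ((int j + int k) * h) mod int n"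
    using \<open>0 < n\<close> by (simp_all add: t_def nat_mod_less)
  have "(int t - int k + int t) mod int n = (2 * int t - int k) mod int n"
    by (simp add: algebra_simps)
  also have "\<dots> = (2 * ((int j + int k) * h) - int k) mod int n"
    unfolding int_t by (metis mod_diff_left_eq mod_mult_right_eq)
  also have "\<dots> = ((int j + int k) * (2 * h) - int k) mod int n"
    by (simp add: algebra_simps)
  also have "\<dots> = (int j + (int j + int k) * int n) mod int n"
    by (simp only: h) (simp add: algebra_simps)
  also have "\<dots> = int j"
    using assms(3) by simp
  finally have "(int t - int k + int t) mod int n = int j" .
  then have "(t, True) \<otimes>\<^bsub>dihedral_group n\<^esub> (k, True) \<otimes>\<^bsub>dihedral_group n\<^esub> (t, True) = (j, True)"
    using \<open>t < n\<close> assms(2) nat_mod_less[OF \<open>0 < n\<close>] by (simp add: dihedral_mult mod_simps)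
  then show ?thesis
    using that[of "(t, True)"] \<open>t < n\<close> by (simp add: dihedral_carrier dihedral_inv_reflection)
qed

section \<open>The Killing form of a generating normal subset\<close>

lemma dihedral_generating_set_has_reflection:
  assumes "0 < n" "C \<subseteq> carrier (dihedral_group n)" "generate (dihedral_group n) C = carrier (dihedral_group n)"
  shows "\<exists>k. (k, True) \<in> C"
proof (rule ccontr)
  assume "\<nexists>k. (k, True) \<in> C"
  then have "C \<subseteq> {0..<n} \<times> {False}"
    using assms(2) by (auto simp: dihedral_carrier)
  then have "generate (dihedral_group n) C \<subseteq> {0..<n} \<times> {False}"
    using group.generate_subgroup_incl[OF group_dihedral_group[OF assms(1)] _
        subgroup_dihedral_rotations[OF assms(1)]]
    by blast
  moreover have "(0, True) \<in> generate (dihedral_group n) C"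
    using assms(1,3) by (simp add: dihedral_carrier)
  ultimately show False
    by auto
qed

lemma dihedral_reflections_subset:
  assumes "odd n" "C \<subseteq> carrier (dihedral_group n)" "conj_closed (dihedral_group n) C"
    and "generate (dihedral_group n) C = carrier (dihedral_group n)"
  shows "{0..<n} \<times> {True} \<subseteq> C"
proof -
  obtain k where k: "(k, True) \<in> C"
    using dihedral_generating_set_has_reflection odd_pos assms by metis
  then have "k < n"
    using assms(2) by (auto simp: dihedral_carrier)
  have "(j, True) \<in> C" if "j < n" for j
  proof -
    obtain g where "g \<in> carrier (dihedral_group n)"
      and "g \<otimes>\<^bsub>dihedral_group n\<^esub> (k, True) \<otimes>\<^bsub>dihedral_group n\<^esub> inv\<^bsub>dihedral_group n\<^esub> g = (j, True)"
      using dihedral_reflections_conjugate[OF assms(1) \<open>k < n\<close> \<open>j < n\<close>] .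
    then show ?thesis
      using assms(3) k unfolding conj_closed_def by metis
  qed
  then show ?thesis by auto
qed

lemma dihedral_conj_closed_inv:
  assumes "0 < n" "C \<subseteq> carrier (dihedral_group n)" "conj_closed (dihedral_group n) C" "x \<in> C"
  shows "inv\<^bsub>dihedral_group n\<^esub> x \<in> C"
proof -
  obtain a b where x: "x = (a, b)" "a < n"
    using assms(2,4) by (cases x) (auto simp: dihedral_carrier)
  show ?thesis
  proof (cases b)
    case True
    then show ?thesis using assms(4) x by (simp add: dihedral_inv_reflection)
  next
    case False
    \<comment> \<open>conjugation by a reflection inverts rotations\<close>
    have "(0, True) \<otimes>\<^bsub>dihedral_group n\<^esub> x \<otimes>\<^bsub>dihedral_group n\<^esub> inv\<^bsub>dihedral_group n\<^esub> (0, True) \<in> C"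
      using assms unfolding conj_closed_def by (simp add: dihedral_carrier)
    then show ?thesis
      using assms(1) x False nat_mod_less[OF assms(1)]
      by (simp add: dihedral_inv_reflection dihedral_inv_rotation dihedral_mult mod_simps)
  qed
qed

lemma card_dihedral_reflections:
  assumes "C \<subseteq> carrier (dihedral_group n)" "{0..<n} \<times> {True} \<subseteq> C"
  shows "card {z\<in>C. snd z} = n"
proof -
  have "{z\<in>C. snd z} = {0..<n} \<times> {True}"
    using assms by (auto simp: dihedral_carrier)
  then show ?thesis
    by (simp add: card_cartesian_product)
qed

lemma killing_matrix_dihedral:
  assumes "odd n" "C \<subseteq> carrier (dihedral_group n) - {\<one>\<^bsub>dihedral_group n\<^esub>}"
    and "{0..<n} \<times> {True} \<subseteq> C" "x \<in> C" "y \<in> C"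
  shows "killing_matrix (dihedral_group n) C x y =
    (if snd x = snd y then of_nat (card {z\<in>C. \<not> snd z}) else 1) + (if y = inv\<^bsub>dihedral_group n\<^esub> x then of_nat n else 0)"
proof -
  let ?D = "dihedral_group n"
  have "0 < n" using assms(1) by (rule odd_pos)
  interpret D: group ?D using \<open>0 < n\<close> by (rule group_dihedral_group)
  have xy: "x \<in> carrier ?D" "y \<in> carrier ?D"
    using assms(2,4,5) by auto
  obtain r e where r: "x \<otimes>\<^bsub>?D\<^esub> y = (r, e)" "r < n"
    using D.m_closed[OF xy] by (cases "x \<otimes>\<^bsub>?D\<^esub> y") (auto simp: dihedral_carrier)
  have e: "e = (snd x \<noteq> snd y)"
    using snd_dihedral_mult[of n x y] r(1) by simp
  have inv_iff: "y = inv\<^bsub>?D\<^esub> x \<longleftrightarrow> x \<otimes>\<^bsub>?D\<^esub> y = \<one>\<^bsub>?D\<^esub>"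
    using xy by (metis D.inv_equality D.inv_comm D.r_inv)
  have one_notin: "(0, False) \<notin> C"
    using assms(2) by (auto simp: dihedral_one)
  consider "snd x \<noteq> snd y" | "snd x = snd y" "r = 0" | "snd x = snd y" "0 < r"
    by blast
  then show ?thesis
  proof cases
    case 1
    have "(r, True) \<in> C"
      using assms(3) r(2) by auto
    then have "centralizer ?D (x \<otimes>\<^bsub>?D\<^esub> y) \<inter> C = {(r, True)}"
      using 1 r e one_notin by (auto simp: dihedral_centralizer_reflection[OF assms(1)])
    moreover have "y \<noteq> inv\<^bsub>?D\<^esub> x"
      using 1 snd_dihedral_inv[OF \<open>0 < n\<close> xy(1)] by auto
    ultimately show ?thesis
      using 1 by (simp add: killing_matrix_def)
  next
    case 2
    have "finite C"
      using assms(2) finite_dihedral_carrier by (auto intro: finite_subset)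
    have "card C = card ({z\<in>C. snd z} \<union> {z\<in>C. \<not> snd z})"
      by (rule arg_cong[where f = card]) auto
    also have "\<dots> = n + card {z\<in>C. \<not> snd z}"
      using \<open>finite C\<close> card_dihedral_reflections[OF _ assms(3)] assms(2)
      by (subst card_Un_disjoint) auto
    finally have "card C = n + card {z\<in>C. \<not> snd z}" .
    moreover have "centralizer ?D (x \<otimes>\<^bsub>?D\<^esub> y) \<inter> C = C"
      using 2 r e assms(2) centralizer_one[OF D.monoid_axioms] by (auto simp: dihedral_one)
    moreover have "y = inv\<^bsub>?D\<^esub> x"
      using inv_iff 2 r e by (simp add: dihedral_one)
    ultimately show ?thesis
      using 2 by (simp add: killing_matrix_def)
  next
    case 3
    then have "centralizer ?D (x \<otimes>\<^bsub>?D\<^esub> y) \<inter> C = {z\<in>C. \<not> snd z}"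
      using r e assms(2) by (auto simp: dihedral_centralizer_rotation[OF assms(1)] dihedral_carrier)
    moreover have "y \<noteq> inv\<^bsub>?D\<^esub> x"
      using inv_iff 3 r by (simp add: dihedral_one)
    ultimately show ?thesis
      using 3 by (simp add: killing_matrix_def)
  qed
qed

lemma killing_block_determinant_ne_zero:
  assumes "0 < n"
  shows "(of_nat n + of_nat m * of_nat n) * (of_nat n + of_nat m * of_nat m) \<noteq> (of_nat n * of_nat m :: complex)"
proof -
  have "n * m < n + m * n"
    using assms by simp
  also have "\<dots> \<le> (n + m * n) * (n + m * m)"
    using assms by simp
  finally have "(of_nat ((n + m * n) * (n + m * m)) :: complex) \<noteq> of_nat (n * m)"
    by (simp only: of_nat_eq_iff)
  then show ?thesis
    by simp
qed

theorem theorem9p1: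
  fixes n :: nat and C :: "(nat \<times> bool) set"
  assumes "odd n"
    and "C \<subseteq> carrier (dihedral_group n) - {\<one>\<^bsub>dihedral_group n\<^esub>}"
    and "conj_closed (dihedral_group n) C"
    and "generate (dihedral_group n) C = carrier (dihedral_group n)"
  shows "killing_nondegenerate (dihedral_group n) C"
proof -
  let ?D = "dihedral_group n"
  define m where "m = card {x\<in>C. \<not> snd x}"
  have "0 < n" using assms(1) by (rule odd_pos)
  interpret D: group ?D using \<open>0 < n\<close> by (rule group_dihedral_group)
  have C: "C \<subseteq> carrier ?D" using assms(2) by blast
  have reflections: "{0..<n} \<times> {True} \<subseteq> C"
    using dihedral_reflections_subset[OF assms(1) C assms(3,4)] .
  have "set_matrix_invertible C
      (\<lambda>x y. (if snd x = snd y then of_nat m else 1) + (if y = inv\<^bsub>?D\<^esub> x then of_nat n else 0))"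
  proof (rule set_matrix_invertible_block_plus_involution[where t = snd and s = "m_inv ?D"])
    show "finite C"
      using C finite_dihedral_carrier by (rule finite_subset)
  qed (simp_all add: \<open>0 < n\<close> m_def card_dihedral_reflections[OF C reflections]
      dihedral_conj_closed_inv[OF \<open>0 < n\<close> C assms(3)] snd_dihedral_inv[OF \<open>0 < n\<close> subsetD[OF C]]
      D.inv_inv[OF subsetD[OF C]] killing_block_determinant_ne_zero)
  then show ?thesis
    unfolding killing_nondegenerate_def m_def
    using killing_matrix_dihedral[OF assms(1,2) reflections]
    by (subst set_matrix_invertible_cong) simp_all
qed

end
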